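(* Let $\alpha$ be an automorphism of a commutative ring $R$, $S=R[\theta;\alpha]$, and let $\rho$ be a nonzero non-unit of $R$. Then $S/\rho S$ is not an Artinian right $S$-module.
   Context: $R[\theta;\alpha]$: skew polynomial ring with $\theta r=\alpha(r)\theta$. *)

theory Defs
  imports "HOL-Computational_Algebra.Polynomial"
begin

definition ring_automorphism :: "('a::comm_ring_1 \<Rightarrow> 'a) \<Rightarrow> bool" where
  "ring_automorphism \<alpha> \<longleftrightarrow> bij \<alpha> \<and> \<alpha> 1 = 1 \<and>
     (\<forall>x y. \<alpha> (x + y) = \<alpha> x + \<alpha> y) \<and> (\<forall>x y. \<alpha> (x * y) = \<alpha> x * \<alpha> y)"

text \<open>Skew polynomial ring R[theta;alpha]: elements are polynomials sum r_i theta^i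
  (coefficients written on the left), with theta r = alpha(r) theta, i.e.
  (r theta^i)(s theta^j) = r alpha^i(s) theta^(i+j).\<close>
definition skew_mult :: "('a::comm_ring_1 \<Rightarrow> 'a) \<Rightarrow> 'a poly \<Rightarrow> 'a poly \<Rightarrow> 'a poly" where
  "skew_mult \<alpha> p q =
     (\<Sum>i\<le>degree p. \<Sum>j\<le>degree q. monom (coeff p i * (\<alpha> ^^ i) (coeff q j)) (i + j))"

definition skew_coset :: "('a::comm_ring_1 \<Rightarrow> 'a) \<Rightarrow> 'a \<Rightarrow> 'a poly \<Rightarrow> 'a poly set" where
  "skew_coset \<alpha> \<rho> x = {x + skew_mult \<alpha> [:\<rho>:] s | s. True}"

definition quot_right_submodule ::
  "('a::comm_ring_1 \<Rightarrow> 'a) \<Rightarrow> 'a \<Rightarrow> 'a poly set set \<Rightarrow> bool" where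
  "quot_right_submodule \<alpha> \<rho> N \<longleftrightarrow>
     N \<subseteq> range (skew_coset \<alpha> \<rho>) \<and>
     skew_coset \<alpha> \<rho> 0 \<in> N \<and>
     (\<forall>x y. skew_coset \<alpha> \<rho> x \<in> N \<longrightarrow> skew_coset \<alpha> \<rho> y \<in> N \<longrightarrow>
             skew_coset \<alpha> \<rho> (x + y) \<in> N) \<and>
     (\<forall>x. skew_coset \<alpha> \<rho> x \<in> N \<longrightarrow> skew_coset \<alpha> \<rho> (- x) \<in> N) \<and>
     (\<forall>x s. skew_coset \<alpha> \<rho> x \<in> N \<longrightarrow> skew_coset \<alpha> \<rho> (skew_mult \<alpha> x s) \<in> N)"

definition quot_artinian :: "('a::comm_ring_1 \<Rightarrow> 'a) \<Rightarrow> 'a \<Rightarrow> bool" where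
  "quot_artinian \<alpha> \<rho> \<longleftrightarrow>
     (\<forall>N :: nat \<Rightarrow> 'a poly set set.
        (\<forall>n. quot_right_submodule \<alpha> \<rho> (N n)) \<and> (\<forall>n. N (Suc n) \<subseteq> N n) \<longrightarrow>
        (\<exists>m. \<forall>n\<ge>m. N n = N m))"

end

theory Submission
  imports Defs
begin

text \<open>
  The right submodules \<open>(\<theta>\<^sup>n S + \<rho> S) / \<rho> S\<close> form a descending chain. Since
  \<open>\<rho>\<close> is a constant, \<open>\<theta>\<^sup>n S + \<rho> S\<close> consists of the skew polynomials whose
  coefficients below degree \<open>n\<close> are all divisible by \<open>\<rho>\<close>; this condition is
  preserved by right multiplication because the coefficients of \<open>x s\<close> in degree
  \<open>k\<close> only involve the coefficients of \<open>x\<close> in degrees \<open>\<le> k\<close>, multiplied on the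
  right. As \<open>\<rho>\<close> is not a unit, \<open>\<theta>\<^sup>n\<close> lies in the \<open>n\<close>-th member of the chain
  but not in the next, so the chain never stabilises.
\<close>

definition dvd_below :: "'a::comm_ring_1 \<Rightarrow> nat \<Rightarrow> 'a poly set" where
  "dvd_below \<rho> n = {x. \<forall>i<n. \<rho> dvd coeff x i}"

lemma skew_mult_const_left: "skew_mult \<alpha> [:c:] s = smult c s"
proof -
  have "skew_mult \<alpha> [:c:] s = (\<Sum>j\<le>degree s. smult c (monom (coeff s j) j))"
    by (simp add: skew_mult_def smult_monom)
  also have "\<dots> = [:c:] * (\<Sum>j\<le>degree s. monom (coeff s j) j)"
    unfolding sum_distrib_left by simp
  finally show ?thesis
    by (simp add: poly_as_sum_of_monoms)
qed

lemma skew_coset_eq: "skew_coset \<alpha> \<rho> x = {x + smult \<rho> s | s. True}"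
  by (simp add: skew_coset_def skew_mult_const_left)

lemma dvd_below_skew_coset_cong:
  assumes "skew_coset \<alpha> \<rho> y = skew_coset \<alpha> \<rho> x" and "x \<in> dvd_below \<rho> n"
  shows "y \<in> dvd_below \<rho> n"
proof -
  have "y \<in> skew_coset \<alpha> \<rho> y"
    unfolding skew_coset_eq by (auto intro: exI[of _ 0])
  then have "y \<in> skew_coset \<alpha> \<rho> x"
    using assms(1) by simp
  then obtain s where "y = x + smult \<rho> s"
    unfolding skew_coset_eq by blast
  with assms(2) show ?thesis
    by (simp add: dvd_below_def)
qed

lemma skew_mult_dvd_below:
  assumes "x \<in> dvd_below \<rho> n"
  shows "skew_mult \<alpha> x s \<in> dvd_below \<rho> n"
  unfolding dvd_below_def
proof (intro CollectI allI impI)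
  fix k assume "k < n"
  have "coeff (skew_mult \<alpha> x s) k = (\<Sum>i\<le>degree x. \<Sum>j\<le>degree s.
      if i + j = k then coeff x i * (\<alpha> ^^ i) (coeff s j) else 0)"
    by (simp add: skew_mult_def coeff_sum coeff_monom)
  also have "\<rho> dvd \<dots>"
    using assms \<open>k < n\<close> by (intro dvd_sum) (auto simp: dvd_below_def)
  finally show "\<rho> dvd coeff (skew_mult \<alpha> x s) k" .
qed

lemma skew_coset_mem_image_dvd_below:
  "skew_coset \<alpha> \<rho> y \<in> skew_coset \<alpha> \<rho> ` dvd_below \<rho> n \<longleftrightarrow> y \<in> dvd_below \<rho> n"
  by (auto intro: dvd_below_skew_coset_cong[OF sym])

lemma quot_right_submodule_dvd_below:
  "quot_right_submodule \<alpha> \<rho> (skew_coset \<alpha> \<rho> ` dvd_below \<rho> n)"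
  unfolding quot_right_submodule_def skew_coset_mem_image_dvd_below
  by (auto intro: skew_mult_dvd_below) (auto simp: dvd_below_def)

lemma dvd_below_Suc_subset: "dvd_below \<rho> (Suc n) \<subseteq> dvd_below \<rho> n"
  by (auto simp: dvd_below_def)

lemma monom_one_in_dvd_below_iff:
  "monom 1 m \<in> dvd_below \<rho> n \<longleftrightarrow> m \<ge> n \<or> \<rho> dvd 1"
  by (auto simp: dvd_below_def coeff_monom)

theorem lemma4p8:
  fixes \<alpha> :: "'a::comm_ring_1 \<Rightarrow> 'a" and \<rho> :: 'a
  assumes "ring_automorphism \<alpha>"
    and "\<rho> \<noteq> 0"
    and "\<not> \<rho> dvd 1"
  shows "\<not> quot_artinian \<alpha> \<rho>"
proof
  assume "quot_artinian \<alpha> \<rho>"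
  moreover define N where "N n = skew_coset \<alpha> \<rho> ` dvd_below \<rho> n" for n
  moreover have "N (Suc n) \<subseteq> N n" for n
    unfolding N_def using dvd_below_Suc_subset by blast
  ultimately obtain m where "N (Suc m) = N m"
    unfolding quot_artinian_def using quot_right_submodule_dvd_below
    by (metis le_add2 plus_1_eq_Suc)
  then have "monom 1 m \<in> dvd_below \<rho> (Suc m) \<longleftrightarrow> monom 1 m \<in> dvd_below \<rho> m"
    unfolding N_def by (metis skew_coset_mem_image_dvd_below)
  with assms(3) show False
    by (simp add: monom_one_in_dvd_below_iff)
qed

end
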